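(* Let $\alpha\in(0,\pi/2)$ and let $X_0=(0,0),X_1,\dots,X_n$ be points on the $x$-axis, $X_i=(x_i,0)$, none of $X_1,\dots,X_n$ redundant. For $0\le j\le n$ let $T_j$ be the apex of the feasibility cone $\mathrm{FC}(X_0,\dots,X_j)$. Then for every $0\le i\le n$, the polygonal path $T_0,T_1,\dots,T_i$ has total length $\sum_{k=0}^{i-1}|T_kT_{k+1}|$ equal to the distance $|X_iT_i|$ between $(x_i,0)$ and $T_i$.
   Context: For a point $X=(x,0)$ and $\alpha\in(0,\pi/2)$, the feasibility cone is $\mathrm{FC}(X)=\{(u,v): v\ge0,\ |u-x|\le v\tan\alpha\}$; for a finite set of points on the $x$-axis, its feasibility cone is the intersection of their cones. If the points have minimum $x$-coordinate $l$ and maximum $x$-coordinate $m$, this intersection is the cone $\{(u,v): v\ge0,\ l\le u - \ldots\}$ with apex $\left(\frac{l+m}{2},\frac{m-l}{2\tan\alpha}\right)$, i.e. the set of points whose left and right coverage bounds $u\mp v\tan\alpha$ contain $[l,m]$. A point $X_{i+1}=(x_{i+1},0)$ is redundant if $x_{i+1}\in[\min_{j\le i}x_j,\max_{j\le i}x_j]$. *)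

theory Defs
  imports "HOL-Analysis.Analysis"
begin

text \<open>Points on the x-axis are given by their x-coordinates x 0, x 1, ...; planar points are real \<times> real
  (Euclidean distance via dist on the product type).\<close>

definition FC_point :: "real \<Rightarrow> real \<Rightarrow> (real \<times> real) set" where
  "FC_point \<alpha> p = {(u, v). v \<ge> 0 \<and> \<bar>u - p\<bar> \<le> v * tan \<alpha>}"

definition FC :: "real \<Rightarrow> real set \<Rightarrow> (real \<times> real) set" where
  "FC \<alpha> P = (\<Inter>p\<in>P. FC_point \<alpha> p)"

definition lo :: "(nat \<Rightarrow> real) \<Rightarrow> nat \<Rightarrow> real" where
  "lo x j = Min (x ` {0..j})"

definition hi :: "(nat \<Rightarrow> real) \<Rightarrow> nat \<Rightarrow> real" where
  "hi x j = Max (x ` {0..j})"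

definition apex :: "real \<Rightarrow> (nat \<Rightarrow> real) \<Rightarrow> nat \<Rightarrow> real \<times> real" where
  "apex \<alpha> x j = ((lo x j + hi x j) / 2, (hi x j - lo x j) / (2 * tan \<alpha>))"

definition redundant :: "(nat \<Rightarrow> real) \<Rightarrow> nat \<Rightarrow> bool" where
  "redundant x i \<longleftrightarrow> x (Suc i) \<in> {lo x i .. hi x i}"

end

theory Submission
  imports Defs
begin

text \<open>While no point is redundant, each new point moves one end of the interval
  [lo x k, hi x k] and leaves the other one fixed. The apex of an interval lies on the two
  rays of slope \<plusminus>1/tan \<alpha> through its endpoints, at distance proportional to the width
  of the interval; so the apex moves along the ray through the fixed endpoint by a distance
  proportional to the growth of the width. The path length therefore telescopes to that
  proportionality factor times the current width, which is also the distance from the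
  newest point, an endpoint of the current interval, to the current apex.\<close>

text \<open>Distance from the apex to either endpoint per unit width; it equals 1 / (2 sin \<alpha>).\<close>

definition apex_slant :: "real \<Rightarrow> real" where
  "apex_slant \<alpha> = sqrt (1/4 + 1 / (4 * tan \<alpha> ^ 2))"

lemma dist_Pair_slope:
  fixes a b c e d t :: real
  assumes "0 \<le> d" "0 < t" "\<bar>a - c\<bar> = d / 2" "\<bar>b - e\<bar> = d / (2 * t)"
  shows "dist (a, b) (c, e) = sqrt (1/4 + 1 / (4 * t ^ 2)) * d"
proof -
  have "dist (a, b) (c, e) = sqrt (\<bar>a - c\<bar>\<^sup>2 + \<bar>b - e\<bar>\<^sup>2)"
    by (simp add: dist_Pair_Pair dist_real_def)
  also have "\<dots> = sqrt ((d / 2)\<^sup>2 + (d / (2 * t))\<^sup>2)"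
    by (simp only: assms(3,4))
  also have "(d / 2)\<^sup>2 + (d / (2 * t))\<^sup>2 = d\<^sup>2 * (1/4 + 1 / (4 * t ^ 2))"
    using assms(2) by (simp add: power_divide power_mult_distrib field_simps)
  also have "sqrt \<dots> = sqrt (1/4 + 1 / (4 * t ^ 2)) * d"
    using assms(1) by (simp add: real_sqrt_mult)
  finally show ?thesis .
qed

lemma lo_0 [simp]: "lo x 0 = x 0" and hi_0 [simp]: "hi x 0 = x 0"
  unfolding lo_def hi_def by auto

lemma lo_Suc: "lo x (Suc k) = min (lo x k) (x (Suc k))"
  and hi_Suc: "hi x (Suc k) = max (hi x k) (x (Suc k))"
proof -
  have "x ` {0..Suc k} = insert (x (Suc k)) (x ` {0..k})"
    by (auto simp: atLeast0_atMost_Suc)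
  then show "lo x (Suc k) = min (lo x k) (x (Suc k))"
    and "hi x (Suc k) = max (hi x k) (x (Suc k))"
    unfolding lo_def hi_def by (simp_all add: min.commute max.commute)
qed

lemma lo_le_hi: "lo x k \<le> hi x k"
  unfolding lo_def hi_def by (intro order.trans[OF Min_le Max_ge]) auto

lemma not_redundant_extends_one_end:
  assumes "\<not> redundant x k"
  obtains "lo x (Suc k) = x (Suc k)" "hi x (Suc k) = hi x k" "x (Suc k) < lo x k"
        | "hi x (Suc k) = x (Suc k)" "lo x (Suc k) = lo x k" "hi x k < x (Suc k)"
  using assms lo_le_hi[of x k] unfolding redundant_def
  by (cases "x (Suc k) < lo x k") (auto simp: lo_Suc hi_Suc)

lemma dist_apex_not_redundant:
  assumes "0 < tan \<alpha>" "\<not> redundant x k"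
  shows "dist (apex \<alpha> x k) (apex \<alpha> x (Suc k))
           = apex_slant \<alpha> * ((hi x (Suc k) - lo x (Suc k)) - (hi x k - lo x k))"
  using assms(2)
proof (cases rule: not_redundant_extends_one_end)
  case 1
  then show ?thesis
    unfolding apex_def apex_slant_def using assms(1) lo_le_hi[of x k]
    by (intro dist_Pair_slope) (auto simp: field_simps abs_if)
next
  case 2
  then show ?thesis
    unfolding apex_def apex_slant_def using assms(1) lo_le_hi[of x k]
    by (intro dist_Pair_slope) (auto simp: field_simps abs_if)
qed

lemma dist_endpoint_apex:
  assumes "0 < tan \<alpha>" "p = lo x k \<or> p = hi x k"
  shows "dist (p, 0) (apex \<alpha> x k) = apex_slant \<alpha> * (hi x k - lo x k)"
  using assms lo_le_hi[of x k] unfolding apex_def apex_slant_def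
  by (intro dist_Pair_slope) (auto simp: field_simps abs_if)

lemma sum_dist_apex:
  assumes "0 < tan \<alpha>" "\<forall>k < i. \<not> redundant x k"
  shows "(\<Sum>k<i. dist (apex \<alpha> x k) (apex \<alpha> x (Suc k))) = apex_slant \<alpha> * (hi x i - lo x i)"
  using assms(2)
proof (induction i)
  case 0
  then show ?case by simp
next
  case (Suc i)
  then show ?case
    using dist_apex_not_redundant[OF assms(1), of x i] by (simp add: algebra_simps)
qed

lemma not_redundant_endpoint:
  assumes "\<forall>k < i. \<not> redundant x k"
  shows "x i = lo x i \<or> x i = hi x i"
proof (cases i)
  case (Suc k)
  then have "\<not> redundant x k" using assms by simp
  then show ?thesis
    using Suc by (cases rule: not_redundant_extends_one_end) auto
qed simp

theorem lemma1:
  fixes \<alpha> :: real and x :: "nat \<Rightarrow> real" and n :: nat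
  assumes "0 < \<alpha>" and "\<alpha> < pi / 2"
    and "x 0 = 0"
    and "\<forall>i < n. \<not> redundant x i"
  shows "\<forall>i \<le> n. (\<Sum>k<i. dist (apex \<alpha> x k) (apex \<alpha> x (Suc k))) = dist (x i, 0) (apex \<alpha> x i)"
proof (intro allI impI)
  fix i assume "i \<le> n"
  then have nr: "\<forall>k < i. \<not> redundant x k" using assms(4) by simp
  have t: "0 < tan \<alpha>" using assms(1,2) by (simp add: tan_gt_zero)
  show "(\<Sum>k<i. dist (apex \<alpha> x k) (apex \<alpha> x (Suc k))) = dist (x i, 0) (apex \<alpha> x i)"
    using sum_dist_apex[OF t nr] dist_endpoint_apex[OF t not_redundant_endpoint[OF nr]]
    by simp
qed

end
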